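(* Fix $m>1$. For $b\in[0,1/\sqrt{24}]$ set $c=c(b)=\sqrt{1+b^2}$, $d=d(b)=\big(2(2b-c)\big)^{-1}$ and $$I(b)=\int_{-1}^{1}\frac{(2+s)-2(bs+c)^2}{(bs+c)^{m+4}}\,(dbs+dc+1)^{m-2}\,(2+s)\,ds .$$ Then $I(0)=\left(\tfrac12\right)^{m-2}\cdot\tfrac23>0$, $I(1/\sqrt{24})<0$, and there exists $b\in(0,1/\sqrt{24})$ with $I(b)=0$.
   Context: For $b\in[0,1/\sqrt{24}]$ one has $d<0$, $bs+c>0$ and $dbs+dc+1\ge 0$ for $s\in[-1,1]$ (with equality only at $b=1/\sqrt{24}$, $s=1$), so the integrand is well defined and integrable. (In the paper, a zero of $I$ yields a smooth $U(2)$-invariant conformally Kähler quasi-Einstein metric on $\mathbb{C}P^2\sharp\overline{\mathbb{C}P}^2$ with parameter $m$.) *)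

theory Defs
  imports "HOL-Analysis.Analysis"
begin

definition cfun :: "real \<Rightarrow> real" where
  "cfun b = sqrt (1 + b^2)"

definition dfun :: "real \<Rightarrow> real" where
  "dfun b = 1 / (2 * (2 * b - cfun b))"

text \<open>The integral I(b) for parameter m (real exponents via powr; the bases are
  positive resp. nonnegative on the relevant range).\<close>
definition Ifun :: "real \<Rightarrow> real \<Rightarrow> real" where
  "Ifun m b = integral {-1..1} (\<lambda>s.
      ((2 + s) - 2 * (b * s + cfun b)^2) / ((b * s + cfun b) powr (m + 4))
      * (dfun b * b * s + dfun b * cfun b + 1) powr (m - 2) * (2 + s))"

end

theory Submission
  imports Defs
begin

text \<open>Write \<open>w = d b s + d c + 1 = (c - b(4 + s)) / (2(c - 2b))\<close>. For \<open>0 \<le> b \<le> 1/\<surd>24\<close>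
  and \<open>-1 \<le> s \<le> 1\<close> this weight is nonnegative and dominates the numerator,
  \<open>|(2 + s) - 2(bs + c)\<^sup>2| \<le> 6w\<close>, so the integrand is bounded by a constant times
  \<open>w powr (m - 1)\<close>. As \<open>m > 1\<close>, this keeps the integrand jointly continuous in \<open>(b, s)\<close>
  even where \<open>w\<close> vanishes and \<open>w powr (m - 2)\<close> blows up (at \<open>(1/\<surd>24, 1)\<close>, when \<open>m < 2\<close>),
  so \<open>I\<close> is continuous on \<open>[0, 1/\<surd>24]\<close>. At \<open>b = 0\<close> the integral is elementary; at
  \<open>b = 1/\<surd>24\<close> one has \<open>c = 5b\<close>, the numerator is \<open>-(1 - s)\<^sup>2/12\<close> and \<open>w = (1 - s)/6\<close>, so
  the integrand is negative. The intermediate value theorem gives the zero.\<close>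

lemma continuous_on_dominated_by_powr:
  fixes f g :: "'a::t2_space \<Rightarrow> real"
  assumes g_cont: "continuous_on S g" and g_nonneg: "\<And>x. x \<in> S \<Longrightarrow> 0 \<le> g x"
    and a: "0 < a"
    and f_cont: "\<And>x. x \<in> S \<Longrightarrow> 0 < g x \<Longrightarrow> continuous (at x within S) f"
    and f_le: "\<And>x. x \<in> S \<Longrightarrow> \<bar>f x\<bar> \<le> K * g x powr a"
  shows "continuous_on S f"
  unfolding continuous_on_eq_continuous_within
proof
  fix x assume x: "x \<in> S"
  show "continuous (at x within S) f"
  proof (cases "g x = 0")
    case False
    then show ?thesis using f_cont[OF x] g_nonneg[OF x] by simp
  next
    case True
    have in_S: "\<forall>\<^sub>F y in at x within S. y \<in> S"
      by (simp add: eventually_at_filter)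
    have "(g \<longlongrightarrow> g x) (at x within S)"
      using g_cont x by (simp add: continuous_on_def)
    then have "((\<lambda>y. g y powr a) \<longlongrightarrow> 0) (at x within S)"
      using True a in_S by (intro tendsto_zero_powrI) (auto elim: eventually_mono intro: g_nonneg)
    moreover have "\<forall>\<^sub>F y in at x within S. norm (f y) \<le> norm (g y powr a) * K"
      using in_S by eventually_elim (simp add: f_le mult.commute)
    ultimately have "(f \<longlongrightarrow> 0) (at x within S)"
      by (rule tendsto_0_le)
    moreover have "f x = 0"
      using f_le[OF x] True by simp
    ultimately show ?thesis by (simp add: continuous_within)
  qed
qed

definition bmax :: real where
  "bmax = 1 / sqrt 24"

definition I_lin :: "real \<Rightarrow> real \<Rightarrow> real" where
  "I_lin b s = b * s + cfun b"

definition I_num :: "real \<Rightarrow> real \<Rightarrow> real" where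
  "I_num b s = (2 + s) - 2 * (I_lin b s)^2"

definition I_weight :: "real \<Rightarrow> real \<Rightarrow> real" where
  "I_weight b s = dfun b * b * s + dfun b * cfun b + 1"

definition I_integrand :: "real \<Rightarrow> real \<Rightarrow> real \<Rightarrow> real" where
  "I_integrand m b s =
     I_num b s / I_lin b s powr (m + 4) * I_weight b s powr (m - 2) * (2 + s)"

lemma Ifun_eq_integral_I_integrand: "Ifun m b = integral {-1..1} (I_integrand m b)"
  unfolding Ifun_def I_integrand_def I_num_def I_lin_def I_weight_def by simp

lemma bmax_pos: "0 < bmax"
  unfolding bmax_def by simp

lemma bmax_sq: "bmax^2 = 1/24"
  unfolding bmax_def by (simp add: power_divide)

lemma cfun_sq: "(cfun b)^2 = 1 + b^2"
  unfolding cfun_def by simp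

lemma cfun_ge_1: "1 \<le> cfun b"
  unfolding cfun_def by simp

lemma cfun_bmax: "cfun bmax = 5 * bmax"
  unfolding cfun_def using bmax_sq bmax_pos
  by (intro real_sqrt_unique) (auto simp: power_mult_distrib)

lemma parameter_bounds:
  assumes "b \<in> {0..bmax}"
  shows "b^2 \<le> 1/24" "b \<le> 1/4" "5 * b \<le> cfun b" "cfun b \<le> 3/2"
proof -
  show b2: "b^2 \<le> 1/24"
    using assms power_mono[of b bmax 2] bmax_sq by simp
  show "b \<le> 1/4"
    using b2 power2_le_imp_le[of b "1/4"] by (simp add: power_divide)
  show "5 * b \<le> cfun b"
    unfolding cfun_def using b2 by (intro real_le_rsqrt) (simp add: power_mult_distrib)
  have "sqrt (1 + b^2) \<le> sqrt ((3/2)^2)"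
    using b2 by (intro real_sqrt_le_mono) (simp add: power_divide)
  then show "cfun b \<le> 3/2"
    unfolding cfun_def by simp
qed

lemma I_weight_eq:
  assumes "cfun b \<noteq> 2 * b"
  shows "I_weight b s = (cfun b - b * (4 + s)) / (2 * (cfun b - 2 * b))"
proof -
  define w where "w = 2 * (cfun b - 2 * b)"
  have w: "w \<noteq> 0"
    using assms by (simp add: w_def)
  have d: "dfun b = - 1 / w"
    unfolding dfun_def w_def by (simp add: divide_simps algebra_simps)
  have "I_weight b s = 1 - (b * s + cfun b) / w"
    unfolding I_weight_def d by (simp add: algebra_simps add_divide_distrib)
  also have "\<dots> = (w - (b * s + cfun b)) / w"
    using w by (simp add: diff_divide_distrib)
  finally show ?thesis
    by (simp add: w_def algebra_simps)
qed

lemma two_b_lt_cfun: "b \<in> {0..bmax} \<Longrightarrow> 2 * b < cfun b"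
  using parameter_bounds(2)[of b] cfun_ge_1[of b] by simp

lemma weight_numerator_nonneg:
  assumes "b \<in> {0..bmax}" "s \<in> {-1..1}"
  shows "0 \<le> cfun b - b * (4 + s)"
proof -
  have "b * s \<le> b"
    using assms by (simp add: mult_left_le)
  then show ?thesis
    using parameter_bounds(3)[OF assms(1)] by (simp add: algebra_simps)
qed

lemma I_weight_nonneg:
  assumes "b \<in> {0..bmax}" "s \<in> {-1..1}"
  shows "0 \<le> I_weight b s"
proof -
  have "2 * b < cfun b"
    using two_b_lt_cfun[OF assms(1)] .
  then show ?thesis
    using weight_numerator_nonneg[OF assms] by (simp add: I_weight_eq)
qed

lemma I_lin_ge_half:
  assumes "b \<in> {0..bmax}" "s \<in> {-1..1}"
  shows "1/2 \<le> I_lin b s"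
proof -
  have "- b \<le> b * s"
    using assms mult_left_mono[of "-1" s b] by simp
  then show ?thesis
    using assms parameter_bounds(2)[OF assms(1)] cfun_ge_1[of b] by (simp add: I_lin_def)
qed

lemma I_num_le:
  assumes "b \<in> {0..bmax}" "s \<in> {-1..1}"
  shows "I_num b s \<le> 2 * (cfun b - b * (4 + s))"
proof -
  define c where "c = cfun b"
  have c: "c^2 = 1 + b^2" "1 \<le> c"
    unfolding c_def by (rule cfun_sq, rule cfun_ge_1)
  have b: "0 \<le> b" "b \<le> 1/4" "b^2 \<le> 1/24"
    using assms parameter_bounds[OF assms(1)] by auto
  define f where "f t = t - 2 * b^2 * t^2 - 4 * (b * c) * t - 2 * b^2 - 2 * c + 8 * b + 2 * b * t"
    for t
  have N_eq: "I_num b s = f s + 2 * (c - b * (4 + s))"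
    unfolding I_num_def I_lin_def c_def[symmetric] f_def using c(1)
    by (simp add: algebra_simps power2_eq_square)
  have "(b * c)^2 \<le> (5/24)^2"
    using c(1) b(3) mult_mono[of "b^2" "1/24" "1 + b^2" "25/24"]
    by (simp add: power_mult_distrib power_divide)
  then have bc: "b * c \<le> 5/24"
    by (rule power2_le_imp_le) simp
  have "b^2 * (1 + s) \<le> b^2 * 2"
    using assms by (intro mult_left_mono) auto
  then have "0 \<le> (1 - s) * (1 - 4 * (b * c) + 2 * b - 2 * (b^2 * (1 + s)))"
    using assms bc b by (intro mult_nonneg_nonneg) auto
  moreover have "f 1 - f s = (1 - s) * (1 - 4 * (b * c) + 2 * b - 2 * (b^2 * (1 + s)))"
    unfolding f_def by (simp add: algebra_simps power2_eq_square)
  ultimately have f_mono: "f s \<le> f 1"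
    by linarith
  \<comment> \<open>\<open>f 1 \<le> 0\<close> is a comparison of square roots, decided by the sign of \<open>(24b\<^sup>2 - 1)(4b - 3)\<close>\<close>
  have "(1 + 10 * b - 4 * b^2)^2 \<le> (2 * c * (2 * b + 1))^2"
  proof -
    have "(2 * c * (2 * b + 1))^2 = 4 * (1 + b^2) * (2 * b + 1)^2"
      using c(1) by (simp add: power_mult_distrib)
    then have "(2 * c * (2 * b + 1))^2 - (1 + 10 * b - 4 * b^2)^2 = (24 * b^2 - 1) * (4 * b - 3)"
      by (simp add: algebra_simps power2_eq_square)
    moreover have "0 \<le> (24 * b^2 - 1) * (4 * b - 3)"
      using b by (intro mult_nonpos_nonpos) auto
    ultimately show ?thesis by linarith
  qed
  then have "1 + 10 * b - 4 * b^2 \<le> 2 * c * (2 * b + 1)"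
    by (rule power2_le_imp_le) (use b c in simp)
  then have "f 1 \<le> 0"
    unfolding f_def by (simp add: algebra_simps)
  then show ?thesis
    using N_eq f_mono by (simp add: c_def)
qed

lemma I_num_ge:
  assumes "b \<in> {0..bmax}" "s \<in> {-1..1}"
  shows "- I_num b s \<le> 2 * (cfun b - b * (4 + s))"
proof -
  define c where "c = cfun b"
  have c: "c^2 = 1 + b^2" "1 \<le> c" "5 * b \<le> c"
    unfolding c_def using cfun_sq cfun_ge_1 parameter_bounds(3)[OF assms(1)] by auto
  have b: "0 \<le> b" "b \<le> 1/4" "b^2 \<le> 1/24"
    using assms parameter_bounds[OF assms(1)] by auto
  define g where "g t = 2 * b^2 * t^2 + t * (4 * b * c + 2 * b - 1) + 2 * b^2 - 2 * c + 8 * b"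
    for t
  have N_eq: "- I_num b s = g s + 2 * (c - b * (4 + s))"
    unfolding I_num_def I_lin_def c_def[symmetric] g_def using c(1)
    by (simp add: algebra_simps power2_eq_square)
  \<comment> \<open>\<open>g\<close> is convex, so it suffices to check the endpoints \<open>t = \<plusminus>1\<close>\<close>
  have g_convex: "g s = (1 + s)/2 * g 1 + (1 - s)/2 * g (-1) + 2 * b^2 * (s^2 - 1)"
    unfolding g_def by (simp add: field_simps power2_eq_square)
  have "2 * c * (2 * b - 1) \<le> 10 * b * (2 * b - 1)"
    using b c by (intro mult_right_mono_neg) auto
  then have g1: "g 1 \<le> 0"
    unfolding g_def using b by (simp add: algebra_simps power2_eq_square)
  have "b \<le> b * c"
    using b c mult_left_mono[of 1 c b] by simp
  then have g_minus_1: "g (-1) \<le> 0"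
    unfolding g_def using b c by (simp add: algebra_simps power2_eq_square)
  have "(1 + s)/2 * g 1 \<le> 0" "(1 - s)/2 * g (-1) \<le> 0" "2 * b^2 * (s^2 - 1) \<le> 0"
    using g1 g_minus_1 assms abs_square_le_1[of s]
    by (auto intro!: mult_nonneg_nonpos)
  then show ?thesis
    using N_eq g_convex by (simp add: c_def)
qed

lemma abs_I_num_le_I_weight:
  assumes "b \<in> {0..bmax}" "s \<in> {-1..1}"
  shows "\<bar>I_num b s\<bar> \<le> 6 * I_weight b s"
proof -
  have w: "0 < cfun b - 2 * b" "cfun b - 2 * b \<le> 3/2"
    using assms two_b_lt_cfun parameter_bounds(4)[OF assms(1)] by auto
  have "\<bar>I_num b s\<bar> \<le> 2 * (cfun b - b * (4 + s))"
    using I_num_le[OF assms] I_num_ge[OF assms] by linarith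
  also have "cfun b - b * (4 + s) = I_weight b s * (2 * (cfun b - 2 * b))"
    using w by (simp add: I_weight_eq)
  also have "\<dots> \<le> I_weight b s * 3"
    using I_weight_nonneg[OF assms] w by (intro mult_left_mono) auto
  finally show ?thesis by simp
qed

lemma abs_I_integrand_le:
  assumes m: "1 < m" and box: "b \<in> {0..bmax}" "s \<in> {-1..1}"
  shows "\<bar>I_integrand m b s\<bar> \<le> 18 * 2 powr (m + 4) * I_weight b s powr (m - 1)"
proof (cases "I_weight b s = 0")
  case True
  then show ?thesis by (simp add: I_integrand_def)
next
  case False
  define W where "W = I_weight b s"
  define L where "L = I_lin b s powr (m + 4)"
  have W: "0 < W"
    using False I_weight_nonneg[OF box] by (simp add: W_def)
  have "(1/2) powr (m + 4) \<le> L"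
    unfolding L_def using I_lin_ge_half[OF box] m by (intro powr_mono2) auto
  then have L: "1 / 2 powr (m + 4) \<le> L"
    by (simp add: powr_divide)
  have "0 < 1 / 2 powr (m + 4)"
    by simp
  then have L_pos: "0 < L"
    using L by linarith
  have "\<bar>I_integrand m b s\<bar> = \<bar>I_num b s\<bar> * W powr (m - 2) * (2 + s) / L"
    unfolding I_integrand_def W_def[symmetric] L_def[symmetric]
    using L_pos box by (simp add: abs_mult)
  also have "\<dots> \<le> (6 * W) * W powr (m - 2) * 3 / L"
    using abs_I_num_le_I_weight[OF box] L_pos box
    by (intro divide_right_mono mult_mono) (auto simp: W_def)
  also have "\<dots> \<le> (6 * W) * W powr (m - 2) * 3 / (1 / 2 powr (m + 4))"
    using W L L_pos by (intro divide_left_mono) auto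
  also have "W * W powr (m - 2) = W powr (m - 1)"
    using W powr_add[of W 1 "m - 2"] by simp
  then have "(6 * W) * W powr (m - 2) * 3 / (1 / 2 powr (m + 4)) = 18 * 2 powr (m + 4) * W powr (m - 1)"
    by (simp add: field_simps)
  finally show ?thesis by (simp add: W_def)
qed

lemma I_weight_continuous_on:
  "continuous_on ({0..bmax} \<times> {-1..1}) (\<lambda>p. I_weight (fst p) (snd p))"
proof -
  have "\<forall>p \<in> {0..bmax} \<times> {-1..1}. 2 * (2 * fst p - sqrt (1 + (fst p)^2)) \<noteq> 0"
    using two_b_lt_cfun by (force simp: cfun_def)
  then show ?thesis
    unfolding I_weight_def dfun_def cfun_def by (intro continuous_intros) auto
qed

lemma I_integrand_continuous_on:
  assumes m: "1 < m"
  shows "continuous_on ({0..bmax} \<times> {-1..1}) (\<lambda>p. I_integrand m (fst p) (snd p))"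
proof (rule continuous_on_dominated_by_powr[OF I_weight_continuous_on])
  fix p :: "real \<times> real"
  assume "p \<in> {0..bmax} \<times> {-1..1}"
  then show "0 \<le> I_weight (fst p) (snd p)"
    using I_weight_nonneg by (simp add: mem_Times_iff)
next
  show "0 < m - 1"
    using m by simp
next
  fix p :: "real \<times> real"
  assume "p \<in> {0..bmax} \<times> {-1..1}"
  then show "\<bar>I_integrand m (fst p) (snd p)\<bar>
      \<le> 18 * 2 powr (m + 4) * I_weight (fst p) (snd p) powr (m - 1)"
    using abs_I_integrand_le[OF m] by (simp add: mem_Times_iff)
next
  fix p :: "real \<times> real"
  assume "p \<in> {0..bmax} \<times> {-1..1}" and W: "0 < I_weight (fst p) (snd p)"
  then have box: "fst p \<in> {0..bmax}" "snd p \<in> {-1..1}"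
    by (simp_all add: mem_Times_iff)
  have "2 * fst p - cfun (fst p) \<noteq> 0"
    using two_b_lt_cfun[OF box(1)] by simp
  moreover have "0 < I_lin (fst p) (snd p)"
    using I_lin_ge_half[OF box] by simp
  ultimately show "continuous (at p within {0..bmax} \<times> {-1..1})
      (\<lambda>p. I_integrand m (fst p) (snd p))"
    using W unfolding I_integrand_def I_num_def I_lin_def I_weight_def dfun_def cfun_def
    by (intro continuous_intros) (auto simp: cfun_def)
qed

lemma Ifun_continuous_on:
  assumes "1 < m"
  shows "continuous_on {0..bmax} (Ifun m)"
proof -
  have "continuous_on {0..bmax} (\<lambda>b. integral (cbox (-1) 1) (I_integrand m b))"
    by (rule integral_continuous_on_param)
       (use I_integrand_continuous_on[OF assms] in \<open>simp add: split_beta\<close>)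
  then show ?thesis
    by (simp add: Ifun_eq_integral_I_integrand)
qed

lemma Ifun_0: "Ifun m 0 = (1/2) powr (m - 2) * (2/3)"
proof -
  have c: "cfun 0 = 1" and d: "dfun 0 = -1/2"
    by (simp_all add: dfun_def cfun_def)
  have integrand: "I_integrand m 0 = (\<lambda>s. (s^2 + 2 * s) * (1/2) powr (m - 2))"
    by (simp add: fun_eq_iff I_integrand_def I_num_def I_lin_def I_weight_def c d
        algebra_simps power2_eq_square)
  have "((\<lambda>s. s^2 + 2 * s) has_integral ((1^3/3 + 1^2) - ((-1)^3/3 + (-1)^2))) {-1..(1::real)}"
    by (rule fundamental_theorem_of_calculus)
       (auto simp: has_real_derivative_iff_has_vector_derivative[symmetric]
             intro!: derivative_eq_intros simp: power2_eq_square field_simps)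
  then have "((\<lambda>s. s^2 + 2 * s) has_integral 2/3) {-1..(1::real)}"
    by simp
  then have "((\<lambda>s. (s^2 + 2 * s) * (1/2) powr (m - 2)) has_integral 2/3 * (1/2) powr (m - 2))
      {-1..(1::real)}"
    by (rule has_integral_mult_left)
  then have "integral {-1..1} (I_integrand m 0) = 2/3 * (1/2) powr (m - 2)"
    unfolding integrand by (rule integral_unique)
  then show ?thesis
    by (simp add: Ifun_eq_integral_I_integrand mult.commute)
qed

lemma I_integrand_bmax_neg:
  assumes "s \<in> {-1<..<1}"
  shows "I_integrand m bmax s < 0"
proof -
  have "(bmax * s + 5 * bmax)^2 = bmax^2 * (s + 5)^2"
    by (simp add: algebra_simps power2_eq_square)
  then have "I_num bmax s = - ((1 - s)^2) / 12"
    unfolding I_num_def I_lin_def cfun_bmax bmax_sq by (simp add: algebra_simps power2_eq_square)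
  moreover have "I_weight bmax s = (bmax * (1 - s)) / (bmax * 6)"
    using I_weight_eq[of bmax s] bmax_pos by (simp add: cfun_bmax algebra_simps)
  then have "I_weight bmax s = (1 - s) / 6"
    using bmax_pos by simp
  moreover have "0 < I_lin bmax s"
    using I_lin_ge_half[of bmax s] bmax_pos assms by simp
  ultimately show ?thesis
    using assms by (simp add: I_integrand_def mult_neg_pos divide_neg_pos)
qed

lemma Ifun_bmax_neg:
  assumes "1 < m"
  shows "Ifun m bmax < 0"
proof -
  have "continuous_on {-1..1} ((\<lambda>p. I_integrand m (fst p) (snd p)) \<circ> (\<lambda>s. (bmax, s)))"
    using bmax_pos
    by (intro continuous_on_compose continuous_intros
        continuous_on_subset[OF I_integrand_continuous_on[OF assms]]) auto
  then have "continuous_on {-1..1} (I_integrand m bmax)"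
    by (simp add: o_def)
  then have "integral {-1..1} (I_integrand m bmax) < integral {-1..1} (\<lambda>s. 0)"
    using integral_less_real[OF _ continuous_on_const, of "-1" 1 "I_integrand m bmax" 0]
      I_integrand_bmax_neg by auto
  then show ?thesis
    by (simp add: Ifun_eq_integral_I_integrand)
qed

theorem mainTheorem3:
  fixes m :: real
  assumes "m > 1"
  shows "Ifun m 0 = (1/2) powr (m - 2) * (2/3) \<and> Ifun m 0 > 0
       \<and> Ifun m (1 / sqrt 24) < 0
       \<and> (\<exists>b. 0 < b \<and> b < 1 / sqrt 24 \<and> Ifun m b = 0)"
proof -
  have I0: "Ifun m 0 > 0"
    by (simp add: Ifun_0)
  have I1: "Ifun m bmax < 0"
    using Ifun_bmax_neg[OF assms] .
  obtain b where b: "0 \<le> b" "b \<le> bmax" "Ifun m b = 0"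
    using IVT2'[of "Ifun m" bmax 0 0] I0 I1 bmax_pos Ifun_continuous_on[OF assms] by force
  have "b \<noteq> 0" "b \<noteq> bmax"
    using b I0 I1 by auto
  with b have "0 < b \<and> b < bmax \<and> Ifun m b = 0"
    by simp
  then show ?thesis
    using I0 I1 Ifun_0 unfolding bmax_def by blast
qed

end
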